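(* The Thue–Morse word $t$ is uniformly abelian-square rich.
   Context: The Thue–Morse word $t=0110100110010110\cdots$ is the fixed point starting with $0$ of the substitution $\mu:0\mapsto 01,\ 1\mapsto 10$. An abelian square is a word $v_1v_2$ where $v_1$ and $v_2$ have the same number of occurrences of each letter. An infinite word $w$ is uniformly abelian-square rich if there is a constant $C>0$ such that for all sufficiently large $n$, every factor of $w$ of length $n$ has at least $Cn^2$ distinct factors that are abelian squares. *)

theory Defs
  imports "HOL-Library.Multiset" Complex_Main
begin

fun mu_letter :: "nat \<Rightarrow> nat list" where
  "mu_letter a = (if a = 0 then [0, 1] else [1, 0])"

definition mu :: "nat list \<Rightarrow> nat list" where
  "mu u = concat (map mu_letter u)"

text \<open>The Thue-Morse word t as an infinite word nat => nat: the fixed point of mu starting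
  with 0, i.e. the limit of the prefixes mu^k(0). Since mu^(n+1)(0) has length 2^(n+1) > n,
  its n-th letter is t(n).\<close>
definition thue_morse :: "nat \<Rightarrow> nat" where
  "thue_morse n = (mu ^^ Suc n) [0] ! n"

definition inf_factor :: "(nat \<Rightarrow> 'a) \<Rightarrow> nat \<Rightarrow> nat \<Rightarrow> 'a list" where
  "inf_factor w i n = map w [i..<i+n]"

definition factors :: "'a list \<Rightarrow> 'a list set" where
  "factors u = {v. \<exists>p s. u = p @ v @ s}"

definition abelian_square :: "'a list \<Rightarrow> bool" where
  "abelian_square v \<longleftrightarrow> v \<noteq> [] \<and>
     (\<exists>v1 v2. v = v1 @ v2 \<and> (\<forall>a. count_list v1 a = count_list v2 a))"

definition uniformly_abelian_square_rich :: "(nat \<Rightarrow> 'a) \<Rightarrow> bool" where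
  "uniformly_abelian_square_rich w \<longleftrightarrow>
     (\<exists>C::real. C > 0 \<and> (\<exists>N. \<forall>n\<ge>N. \<forall>i.
        real (card {v \<in> factors (inf_factor w i n). abelian_square v}) \<ge> C * (real n)^2))"

end

theory Submission
  imports Defs
begin

text \<open>Every aligned pair \<open>tm (2k) tm (2k+1)\<close> is \<open>01\<close> or \<open>10\<close>, so every factor
  starting at an even position whose length is a multiple of 4 is an abelian square. On the other
  hand no factor of length about \<open>6d\<close> has period \<open>d\<close>: an even period \<open>2e\<close> yields period \<open>e\<close> on a
  window of half the length, and an odd period forces three equal consecutive letters, which \<open>t\<close> does not contain.
  So inside a window of length \<open>n\<close>, the factors of length \<open>4m\<close> with \<open>n/10 < m \<le> n/5\<close> starting at
  the even positions \<open>x\<^sub>0 + 2r\<close> with \<open>r \<le> n/30\<close> are pairwise distinct abelian squares, and there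
  are at least \<open>n\<^sup>2/1200\<close> of them.\<close>

function tm :: "nat \<Rightarrow> nat" where
  "tm n = (if n = 0 then 0 else if even n then tm (n div 2) else 1 - tm (n div 2))"
  by auto
termination by (relation "measure id") auto

declare tm.simps[simp del]

lemma tm_0[simp]: "tm 0 = 0"
  by (subst tm.simps) simp

lemma tm_le_1: "tm n \<le> 1"
  by (induction n rule: tm.induct) (subst tm.simps, auto)

lemma tm_double[simp]: "tm (2 * k) = tm k"
  by (subst tm.simps) auto

lemma tm_Suc_double[simp]: "tm (Suc (2 * k)) = 1 - tm k"
  by (subst tm.simps) auto

lemma tm_Suc_double_neq: "tm (Suc (2 * k)) \<noteq> tm (2 * k)"
  using tm_le_1[of k] by simp presburger

lemma length_mu: "length (mu u) = 2 * length u"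
  unfolding mu_def by (induction u) auto

lemma nth_mu: "i < 2 * length u \<Longrightarrow> mu u ! i = mu_letter (u ! (i div 2)) ! (i mod 2)"
proof (induction u arbitrary: i)
  case Nil
  then show ?case by simp
next
  case (Cons a u)
  have mu_Cons: "mu (a # u) = mu_letter a @ mu u"
    unfolding mu_def by simp
  show ?case
  proof (cases "i < 2")
    case True
    then show ?thesis unfolding mu_Cons by (auto simp: nth_append)
  next
    case False
    then obtain j where j: "i = Suc (Suc j)"
      by (metis add_2_eq_Suc le_add_diff_inverse not_less)
    with Cons.prems have "j < 2 * length u" by simp
    from Cons.IH[OF this] show ?thesis
      unfolding mu_Cons j by (simp add: nth_append)
  qed
qed

lemma nth_mu_power: "i < 2 ^ k \<Longrightarrow> (mu ^^ k) [0] ! i = tm i"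
proof (induction k arbitrary: i)
  case 0
  then show ?case by simp
next
  case (Suc k)
  have len: "length ((mu ^^ k) [0]) = 2 ^ k"
    by (induction k) (auto simp: length_mu)
  have tm_i: "tm i = (if even i then tm (i div 2) else 1 - tm (i div 2))"
    by (cases "i = 0") (simp, subst tm.simps, simp)
  have "(mu ^^ Suc k) [0] ! i = mu_letter ((mu ^^ k) [0] ! (i div 2)) ! (i mod 2)"
    using Suc.prems len by (simp add: nth_mu)
  also have "\<dots> = mu_letter (tm (i div 2)) ! (i mod 2)"
    using Suc.prems by (simp add: Suc.IH less_mult_imp_div_less)
  also have "\<dots> = tm i"
    using tm_le_1[of "i div 2"] unfolding tm_i
    by (cases "even i") (auto simp: odd_iff_mod_2_eq_one even_iff_mod_2_eq_zero)
  finally show ?case .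
qed

lemma thue_morse_eq_tm: "thue_morse = tm"
proof
  fix n
  have "n < 2 ^ Suc n"
    by (metis less_exp lessI less_trans)
  then show "thue_morse n = tm n"
    unfolding thue_morse_def by (rule nth_mu_power)
qed

lemma tm_no_cube_of_letter: "tm y = tm (y + 1) \<Longrightarrow> tm (y + 1) = tm (y + 2) \<Longrightarrow> False"
proof (cases "even y")
  case True
  then obtain k where "y = 2 * k" by (rule evenE)
  moreover assume "tm y = tm (y + 1)"
  ultimately show False using tm_Suc_double_neq[of k] by simp
next
  case False
  then obtain k where "y = Suc (2 * k)"
    by (metis oddE Suc_eq_plus1)
  then have "y + 1 = 2 * (k + 1)" "y + 2 = Suc (2 * (k + 1))" by simp_all
  moreover assume "tm (y + 1) = tm (y + 2)"
  ultimately show False using tm_Suc_double_neq[of "k + 1"] by (simp only:)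
qed

lemma tm_odd_period_step:
  assumes "tm (2 * j + (2 * e + 1)) = tm (2 * j)"
    and "tm (2 * j + 1 + (2 * e + 1)) = tm (2 * j + 1)"
  shows "tm (j + e) = tm (j + e + 1)"
proof -
  have pos: "2 * j + (2 * e + 1) = Suc (2 * (j + e))" "2 * j + 1 + (2 * e + 1) = 2 * (j + e + 1)"
    by simp_all
  have "1 - tm (j + e) = tm j"
    using assms(1) by (simp only: pos tm_Suc_double tm_double)
  moreover have "tm (j + e + 1) = 1 - tm j"
    using assms(2) by (simp only: pos tm_Suc_double tm_double) (simp only: Suc_eq_plus1[symmetric] tm_Suc_double)
  ultimately show ?thesis
    using tm_le_1[of "j + e"] tm_le_1[of j] by linarith
qed

lemma tm_local_period_short:
  "0 < d \<Longrightarrow> \<forall>x. a \<le> x \<and> x \<le> b \<longrightarrow> tm (x + d) = tm x \<Longrightarrow> b + 2 < a + 6 * d"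
proof (induction d arbitrary: a b rule: less_induct)
  case (less d)
  show ?case
  proof (cases "even d")
    case True
    then obtain e where e: "d = 2 * e" by (rule evenE)
    with less.prems have e_bounds: "e < d" "0 < e" by auto
    have "\<forall>j. (a + 1) div 2 \<le> j \<and> j \<le> b div 2 \<longrightarrow> tm (j + e) = tm j"
    proof (intro allI impI)
      fix j
      assume "(a + 1) div 2 \<le> j \<and> j \<le> b div 2"
      then have "a \<le> 2 * j \<and> 2 * j \<le> b" by linarith
      with less.prems(2) have "tm (2 * j + d) = tm (2 * j)" by blast
      moreover have "2 * j + d = 2 * (j + e)" using e by simp
      ultimately show "tm (j + e) = tm j" by (simp only: tm_double)
    qed
    from less.IH[OF e_bounds this] have "b div 2 + 2 < (a + 1) div 2 + 6 * e" .
    then show ?thesis using e by linarith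
  next
    case False
    then obtain e where e: "d = 2 * e + 1"
      by (metis oddE)
    show ?thesis
    proof (rule ccontr)
      assume "\<not> b + 2 < a + 6 * d"
      then have "a + 4 \<le> b" using e by linarith
      define j where "j = (a + 1) div 2"
      have j: "a \<le> 2 * j" "2 * j + 3 \<le> b"
        using \<open>a + 4 \<le> b\<close> unfolding j_def by linarith+
      have period: "tm (x + (2 * e + 1)) = tm x" if "a \<le> x" "x \<le> b" for x
        using less.prems(2) that e by blast
      have "tm (j + e) = tm (j + e + 1)"
        by (rule tm_odd_period_step; rule period) (use j in auto)
      moreover have "tm ((j + 1) + e) = tm ((j + 1) + e + 1)"
        by (rule tm_odd_period_step; rule period) (use j in auto)
      ultimately show False
        using tm_no_cube_of_letter[of "j + e"] by (simp add: algebra_simps)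
    qed
  qed
qed

lemma count_list_tm_aligned_block:
  "count_list (map tm [2 * y..<2 * y + 2 * k]) a = (if a \<le> 1 then k else 0)"
proof (induction k)
  case 0
  then show ?case by simp
next
  case (Suc k)
  have pair: "count_list [tm (2 * z), tm (Suc (2 * z))] a = (if a \<le> 1 then 1 else 0)" for z
    using tm_le_1[of z] by (cases "tm z") auto
  have "[2 * y..<2 * y + 2 * Suc k] = [2 * y..<2 * y + 2 * k] @ [2 * (y + k), Suc (2 * (y + k))]"
    using upt_add_eq_append[of "2 * y" "2 * y + 2 * k" 2]
    by (simp add: algebra_simps numeral_2_eq_2)
  then have "map tm [2 * y..<2 * y + 2 * Suc k]
      = map tm [2 * y..<2 * y + 2 * k] @ [tm (2 * (y + k)), tm (Suc (2 * (y + k)))]"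
    by (simp only: map_append list.map)
  then show ?case
    using Suc.IH pair[of "y + k"] by (simp only: count_list_append) simp
qed

lemma abelian_square_tm_aligned:
  assumes "even x" "0 < m"
  shows "abelian_square (map tm [x..<x + 4 * m])"
proof -
  obtain y where y: "x = 2 * y" using assms(1) by (rule evenE)
  have halves: "map tm [x..<x + 4 * m] = map tm [2 * y..<2 * y + 2 * m] @ map tm [2 * (y + m)..<2 * (y + m) + 2 * m]"
    using upt_add_eq_append[of "2 * y" "2 * y + 2 * m" "2 * m"] y by (simp add: algebra_simps)
  have "count_list (map tm [2 * y..<2 * y + 2 * m]) a
      = count_list (map tm [2 * (y + m)..<2 * (y + m) + 2 * m]) a" for a
    by (simp only: count_list_tm_aligned_block)
  moreover have "map tm [2 * y..<2 * y + 2 * m] \<noteq> []"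
    using assms(2) by simp
  ultimately show ?thesis
    unfolding abelian_square_def halves by blast
qed

lemma finite_factors: "finite (factors u)"
proof -
  have "factors u \<subseteq> {xs. set xs \<subseteq> set u \<and> length xs \<le> length u}"
    unfolding factors_def by auto
  then show ?thesis
    using finite_lists_length_le[of "set u" "length u"] finite_subset by blast
qed

lemma map_upt_in_factors_inf_factor:
  assumes "i \<le> x" "x + l \<le> i + n"
  shows "map w [x..<x + l] \<in> factors (inf_factor w i n)"
proof -
  have "[i..<i + n] = [i..<x] @ [x..<x + l] @ [x + l..<i + n]"
    using assms upt_add_eq_append[of i x "i + n - x"] upt_add_eq_append[of x "x + l" "i + n - (x + l)"]
    by simp
  then show ?thesis
    unfolding factors_def inf_factor_def by force
qed

lemma equal_factors_local_period:
  assumes "map w [p..<p + l] = map w [q..<q + l]" "p \<le> q" "p \<le> x" "x < p + l"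
  shows "w (x + (q - p)) = w x"
proof -
  have "map w [p..<p + l] ! (x - p) = map w [q..<q + l] ! (x - p)"
    using assms(1) by simp
  then show ?thesis
    using assms(2-4) by (simp add: add.commute)
qed

lemma inj_on_tm_aligned_blocks:
  assumes "0 < L" "12 * R \<le> 4 * L + 1"
  shows "inj_on (\<lambda>(m, r). map tm [x + 2 * r..<x + 2 * r + 4 * m]) ({L..M} \<times> {0..R})"
proof (rule inj_onI, clarsimp)
  have no_shift: False
    if "r < r'" "r' \<le> R" "L \<le> m"
      and eq: "map tm [x + 2 * r..<x + 2 * r + 4 * m] = map tm [x + 2 * r'..<x + 2 * r' + 4 * m]"
    for m r r'
  proof -
    have "\<forall>y. x + 2 * r \<le> y \<and> y \<le> x + 2 * r + 4 * m - 1 \<longrightarrow> tm (y + 2 * (r' - r)) = tm y"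
      using equal_factors_local_period[OF eq] that assms(1) by (auto simp: diff_mult_distrib2)
    from tm_local_period_short[OF _ this] that assms
    show False by linarith
  qed
  fix m r m' r'
  assume "L \<le> m" "m \<le> M" "r \<le> R" "L \<le> m'" "m' \<le> M" "r' \<le> R"
    and eq: "map tm [x + 2 * r..<x + 2 * r + 4 * m] = map tm [x + 2 * r'..<x + 2 * r' + 4 * m']"
  moreover from arg_cong[OF eq, of length] have "m' = m" by simp
  ultimately show "m = m' \<and> r = r'"
    using no_shift[of r r' m] no_shift[of r' r m] by (metis linorder_neqE_nat)
qed

lemma tm_aligned_blocks_abelian_factors:
  fixes i n :: nat
  assumes "10 \<le> n"
  defines "M \<equiv> n div 5" and "x \<equiv> 2 * ((i + 1) div 2)"
  shows "(\<lambda>(m, r). map tm [x + 2 * r..<x + 2 * r + 4 * m]) ` ({M div 2 + 1..M} \<times> {0..M div 6})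
           \<subseteq> {v \<in> factors (inf_factor tm i n). abelian_square v}"
proof
  fix v
  assume "v \<in> (\<lambda>(m, r). map tm [x + 2 * r..<x + 2 * r + 4 * m]) ` ({M div 2 + 1..M} \<times> {0..M div 6})"
  then obtain m r where v: "v = map tm [x + 2 * r..<x + 2 * r + 4 * m]"
    and m: "0 < m" "m \<le> M" and r: "r \<le> M div 6"
    by auto
  have "i \<le> x + 2 * r" "x + 2 * r + 4 * m \<le> i + n"
    using m r assms(1) unfolding x_def M_def by linarith+
  then show "v \<in> {v \<in> factors (inf_factor tm i n). abelian_square v}"
    using map_upt_in_factors_inf_factor abelian_square_tm_aligned m(1) unfolding v x_def by simp
qed

lemma card_tm_abelian_factors_ge:
  assumes "10 \<le> n"
  shows "real n ^ 2 \<le> 1200 * real (card {v \<in> factors (inf_factor tm i n). abelian_square v})"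
proof -
  define M where "M = n div 5"
  define S where "S = {v \<in> factors (inf_factor tm i n). abelian_square v}"
  let ?A = "{M div 2 + 1..M} \<times> {0..M div 6}"
  have card_le: "card ?A \<le> card S"
  proof -
    have "12 * (M div 6) \<le> 4 * (M div 2 + 1) + 1" by presburger
    from card_image[OF inj_on_tm_aligned_blocks[OF _ this]]
      card_mono[OF _ tm_aligned_blocks_abelian_factors[OF assms, of i]]
    show ?thesis
      unfolding S_def M_def by (simp add: finite_factors)
  qed
  have bounds: "M \<le> 2 * (M - M div 2)" "M \<le> 6 * (M div 6 + 1)" "n \<le> 10 * M"
    using assms unfolding M_def by presburger+
  have "n * n \<le> (10 * M) * (10 * M)"
    by (rule mult_le_mono[OF bounds(3) bounds(3)])
  also have "\<dots> \<le> 100 * ((2 * (M - M div 2)) * (6 * (M div 6 + 1)))"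
    using mult_le_mono[OF bounds(1,2)] by simp
  also have "\<dots> = 1200 * ((M - M div 2) * (M div 6 + 1))"
    by (simp only: mult_ac)
  also have "\<dots> = 1200 * card ?A"
    by (simp add: card_cartesian_product)
  also have "\<dots> \<le> 1200 * card S"
    using card_le by simp
  finally have "n * n \<le> 1200 * card S" .
  then show ?thesis
    unfolding S_def power2_eq_square by (simp flip: of_nat_mult)
qed

theorem proposition2:
  shows "uniformly_abelian_square_rich thue_morse"
  unfolding uniformly_abelian_square_rich_def thue_morse_eq_tm
proof (intro exI conjI allI impI)
  show "(0::real) < 1 / 1200" by simp
  fix n i :: nat
  assume "10 \<le> n"
  from card_tm_abelian_factors_ge[OF this, of i]
  show "1 / 1200 * real n ^ 2 \<le> real (card {v \<in> factors (inf_factor tm i n). abelian_square v})"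
    by simp
qed

end
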